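(* For every fixed $a\in(0,1/2]$, \[ \lim_{n\to\infty}\overline{\Lambda}(n;a)=\theta(a):=\begin{cases}\frac{(1-\sqrt a)^{2}}{a}, & 0<a<\frac14,\\[2pt] \frac{1}{2a}-1, & \frac14\le a\le\frac12.\end{cases} \]
   Context: For integers $n\ge1$, $k\in[0:n]$ and real $x$, the Krawtchouk polynomial is $K_k(x)=K_k^{(n)}(x):=\sum_{j=0}^{k}(-1)^{j}\binom{x}{j}\binom{n-x}{k-j}$, with generalized binomial coefficients $\binom{x}{j}=\frac{x(x-1)\cdots(x-j+1)}{j!}$. Here $[m:n]=\{m,m+1,\dots,n\}$. For real $a\in(0,1/2]$, $\overline{\Lambda}(n;a)$ is the optimal value of the linear program: maximize $-\sum_{k=1}^{n}\left[K_k(0)+K_k(1)\left(\frac1a-1\right)\right]x_k$ over $(x_1,\dots,x_n)\in\mathbb{R}^n$ subject to $x_k\ge0$ for $k\in[1:n]$ and $\sum_{k=1}^{n}[K_k(1)-K_k(i)]x_k\ge -1$ for all $i\in[2:n]$. *)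

theory Defs
  imports "HOL-Analysis.Analysis" "HOL-Library.Extended_Real"
begin

definition kraw :: "nat \<Rightarrow> nat \<Rightarrow> real \<Rightarrow> real" where
  "kraw n k x = (\<Sum>j=0..k. (-1)^j * (x gchoose j) * ((real n - x) gchoose (k - j)))"

text \<open>Feasible set of the LP: vectors x : nat => real, only x_1..x_n relevant
  (others fixed to 0 to make the representation canonical).\<close>
definition lp_feasible :: "nat \<Rightarrow> (nat \<Rightarrow> real) set" where
  "lp_feasible n = {x. (\<forall>k. (k = 0 \<or> k > n) \<longrightarrow> x k = 0) \<and>
      (\<forall>k\<in>{1..n}. x k \<ge> 0) \<and>
      (\<forall>i\<in>{2..n}. (\<Sum>k=1..n. (kraw n k 1 - kraw n k (real i)) * x k) \<ge> -1)}"

definition lp_objective :: "nat \<Rightarrow> real \<Rightarrow> (nat \<Rightarrow> real) \<Rightarrow> real" where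
  "lp_objective n a x = - (\<Sum>k=1..n. (kraw n k 0 + kraw n k 1 * (1 / a - 1)) * x k)"

text \<open>Optimal value of the LP (a supremum, taken in the extended reals so that an
  unbounded LP has value +infinity).\<close>
definition LambdaBar :: "nat \<Rightarrow> real \<Rightarrow> ereal" where
  "LambdaBar n a = (SUP x\<in>lp_feasible n. ereal (lp_objective n a x))"

definition theta :: "real \<Rightarrow> real" where
  "theta a = (if a < 1/4 then (1 - sqrt a)^2 / a else 1 / (2*a) - 1)"

end

theory Submission
  imports Defs
begin

text \<open>
  Upper bounds come from weak duality using only the constraint \<open>i = 2\<close>: \<open>\<overline>\<Lambda>(n;a) \<le> Y\<close>
  as soon as \<open>K\<^sub>k(0) + (1/a - 1 - Y) K\<^sub>k(1) + Y K\<^sub>k(2) \<ge> 0\<close> for all \<open>k\<close>. By the closed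
  forms of \<open>K\<^sub>k(1)\<close> and \<open>K\<^sub>k(2)\<close> this is a quadratic condition in \<open>n - 2k\<close>; it holds for
  every \<open>n\<close> with \<open>Y = 1/(2a) - 1\<close> when \<open>a \<ge> 1/4\<close>, and for large \<open>n\<close> with any \<open>Y\<close> whose
  discriminant \<open>(1/a - 1 - Y)\<^sup>2 - 4Y\<close> is negative, i.e. any \<open>Y\<close> slightly above \<open>\<theta>(a)\<close> when
  \<open>a < 1/4\<close>.

  Lower bounds come from primal points. Putting mass \<open>1/2\<close> on \<open>k = n\<close> gives \<open>1/(2a) - 1\<close>.
  The geometric points \<open>x\<^sub>k \<propto> z\<^sup>k\<close> are evaluated with the generating function
  \<open>\<Sum>\<^sub>k K\<^sub>k(i) z\<^sup>k = (1 - z)\<^sup>i (1 + z)\<^sup>n\<^sup>-\<^sup>i\<close>: with \<open>r = (1 - z)/(1 + z) \<in> (-1, 0)\<close> the constraints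
  reduce to \<open>r\<^sup>i \<le> r\<^sup>2\<close>, and the objective tends to \<open>(1 + (1/a - 1) r)/(r - r\<^sup>2)\<close>, which equals
  \<open>\<theta>(a)\<close> for \<open>r = -\<surd>a/(1 - \<surd>a)\<close>.
\<close>

lemma kraw_of_nat:
  assumes "i \<le> n"
  shows "kraw n k (real i) = (\<Sum>j=0..k. (-1)^j * real (i choose j) * real ((n-i) choose (k-j)))"
  unfolding kraw_def
proof (rule sum.cong[OF refl])
  fix j
  have "real n - real i = real (n - i)" using assms by (simp add: of_nat_diff)
  then show "(-1)^j * (real i gchoose j) * ((real n - real i) gchoose (k - j)) =
     (-1)^j * real (i choose j) * real ((n-i) choose (k-j))"
    by (simp only: binomial_gbinomial)
qed

lemma kraw_generating_function:
  fixes z :: real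
  assumes "i \<le> n"
  shows "(\<Sum>k=0..n. kraw n k (real i) * z^k) = (1 - z)^i * (1 + z)^(n-i)"
proof -
  define g where "g = (\<lambda>j m. ((-1)^j * real (i choose j) * z^j) * (real ((n-i) choose m) * z^m))"
  have "(\<Sum>k=0..n. kraw n k (real i) * z^k) = (\<Sum>k\<le>n. \<Sum>j\<le>k. g j (k - j))"
    unfolding kraw_of_nat[OF assms] g_def atLeast0AtMost
    by (auto simp: sum_distrib_right intro!: sum.cong simp flip: power_add)
  also have "\<dots> = (\<Sum>(j,m)\<in>{(j,m). j+m \<le> n}. g j m)"
    by (rule sum.triangle_reindex_eq[symmetric])
  also have "\<dots> = (\<Sum>(j,m)\<in>{..i}\<times>{..n-i}. g j m)"
  proof (rule sum.mono_neutral_cong_right)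
    show "finite {(j,m). j+m \<le> (n::nat)}"
      by (rule finite_subset[of _ "{..n}\<times>{..n}"]) auto
    show "{..i}\<times>{..n-i} \<subseteq> {(j,m). j+m \<le> n}" using assms by auto
    show "\<forall>x\<in>{(j,m). j+m \<le> n} - {..i}\<times>{..n-i}. (case x of (j,m) \<Rightarrow> g j m) = 0"
      by (auto simp: g_def)
  qed auto
  also have "\<dots> = (\<Sum>j\<le>i. (-1)^j * real (i choose j) * z^j) * (\<Sum>m\<le>n-i. real ((n-i) choose m) * z^m)"
    unfolding g_def sum_product sum.cartesian_product by simp
  also have "(\<Sum>j\<le>i. (-1)^j * real (i choose j) * z^j) = (1 - z)^i"
  proof -
    have e: "\<And>j. (-z)^j = (-1)^j * z^j" by (metis mult_minus1 power_mult_distrib)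
    show ?thesis using binomial_ring[of "-z" 1 i] unfolding e by (simp add: mult_ac)
  qed
  also have "(\<Sum>m\<le>n-i. real ((n-i) choose m) * z^m) = (1 + z)^(n-i)"
    using binomial_ring[of z 1 "n-i"] by (simp add: mult_ac add.commute)
  finally show ?thesis .
qed

lemma kraw_top_degree:
  assumes "i \<le> n"
  shows "kraw n n (real i) = (-1)^i"
proof -
  have "kraw n n (real i) = (\<Sum>j=0..n. if j = i then (-1)^i else 0)"
    unfolding kraw_of_nat[OF assms]
  proof (rule sum.cong[OF refl])
    fix j assume j: "j \<in> {0..n}"
    show "(-1)^j * real (i choose j) * real ((n-i) choose (n-j)) = (if j = i then (-1)^i else 0)"
    proof (cases "j < i")
      case True
      then have "n - i < n - j" using assms j by auto
      then show ?thesis using True by simp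
    next
      case False
      then show ?thesis by auto
    qed
  qed
  also have "\<dots> = (-1)^i" using assms by simp
  finally show ?thesis .
qed

lemma kraw_of_nat_truncate:
  assumes "m \<le> k"
  shows "kraw n k (real m) = (\<Sum>j\<le>m. (-1)^j * real (m choose j) * ((real n - real m) gchoose (k - j)))"
proof -
  have "kraw n k (real m) = (\<Sum>j=0..k. (-1)^j * real (m choose j) * ((real n - real m) gchoose (k - j)))"
    unfolding kraw_def by (simp add: binomial_gbinomial)
  also have "\<dots> = (\<Sum>j\<le>m. (-1)^j * real (m choose j) * ((real n - real m) gchoose (k - j)))"
    using assms by (intro sum.mono_neutral_right) auto
  finally show ?thesis .
qed

lemma kraw_at_0: "kraw n k 0 = real n gchoose k"
  using kraw_of_nat_truncate[of 0 k n] by simp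

lemma kraw_at_1:
  assumes "1 \<le> k"
  shows "kraw n k 1 = ((real n - 1) gchoose k) - ((real n - 1) gchoose (k - 1))"
  using kraw_of_nat_truncate[OF assms, of n] by simp

lemma kraw_at_2:
  assumes "2 \<le> k"
  shows "kraw n k 2 = ((real n - 2) gchoose k) - 2 * ((real n - 2) gchoose (k - 1))
    + ((real n - 2) gchoose (k - 2))"
  using kraw_of_nat_truncate[OF assms, of n] by (simp add: numeral_2_eq_2)

lemma kraw_1_at_2: "kraw n 1 2 = real n - 4"
  unfolding kraw_def by simp

lemma gbinomial_absorb_pred:
  fixes x :: real
  shows "x * ((x - 1) gchoose k) = (x - real k) * (x gchoose k)"
    and "1 \<le> k \<Longrightarrow> x * ((x - 1) gchoose (k - 1)) = real k * (x gchoose k)"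
  using gbinomial_absorb_comp[of x k] gbinomial_absorption[of "k - 1" x] by auto

lemma kraw_at_1_closed:
  assumes "1 \<le> k"
  shows "real n * kraw n k 1 = (real n - 2 * real k) * (real n gchoose k)"
  using gbinomial_absorb_pred[where x="real n" and k=k] assms by (simp add: kraw_at_1 algebra_simps)

lemma kraw_at_2_closed:
  assumes "1 \<le> k"
  shows "real n * (real n - 1) * kraw n k 2 = ((real n - 2 * real k)^2 - real n) * (real n gchoose k)"
proof (cases "k = 1")
  case True
  show ?thesis unfolding True kraw_1_at_2 by (simp add: power2_eq_square algebra_simps)
next
  case False
  with assms have k: "2 \<le> k" by simp
  define N where "N = real n"
  define C where "C = N gchoose k"
  have a1: "(N - 1) * ((N - 2) gchoose k) = (N - 1 - real k) * ((N - 1) gchoose k)"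
   and b1: "(N - 1) * ((N - 2) gchoose (k - 1)) = (N - real k) * ((N - 1) gchoose (k - 1))"
   and g1: "(N - 1) * ((N - 2) gchoose (k - 2)) = (real k - 1) * ((N - 1) gchoose (k - 1))"
    using gbinomial_absorb_pred[where x="N - 1" and k=k] gbinomial_absorb_pred[where x="N - 1" and k="k - 1"] k
    by (simp_all add: of_nat_diff diff_diff_eq algebra_simps numeral_2_eq_2)
  have a0: "N * ((N - 1) gchoose k) = (N - real k) * C"
    and b0: "N * ((N - 1) gchoose (k - 1)) = real k * C"
    using gbinomial_absorb_pred[where x=N and k=k] k by (auto simp: C_def)
  have "N * (N - 1) * ((N - 2) gchoose k) = (N - real k) * (N - 1 - real k) * C"
    using a0 a1 by algebra
  moreover have "N * (N - 1) * ((N - 2) gchoose (k - 1)) = real k * (N - real k) * C"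
    using b0 b1 by algebra
  moreover have "N * (N - 1) * ((N - 2) gchoose (k - 2)) = real k * (real k - 1) * C"
    using b0 g1 by algebra
  ultimately show ?thesis
    unfolding kraw_at_2[OF k] N_def[symmetric] C_def[symmetric]
    by (simp add: algebra_simps power2_eq_square)
qed

lemma lp_objective_le_LambdaBar:
  assumes "x \<in> lp_feasible n"
  shows "ereal (lp_objective n a x) \<le> LambdaBar n a"
  unfolding LambdaBar_def using assms by (rule SUP_upper)

lemma LambdaBar_le_dual:
  assumes n: "2 \<le> n" and Y: "0 \<le> Y"
    and D: "\<And>k. k \<in> {1..n} \<Longrightarrow> 0 \<le> kraw n k 0 + (1/a - 1 - Y) * kraw n k 1 + Y * kraw n k 2"
  shows "LambdaBar n a \<le> ereal Y"
  unfolding LambdaBar_def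
proof (rule SUP_least)
  fix x assume x: "x \<in> lp_feasible n"
  then have xpos: "\<forall>k\<in>{1..n}. x k \<ge> 0"
    and cons: "\<forall>i\<in>{2..n}. (\<Sum>k=1..n. (kraw n k 1 - kraw n k (real i)) * x k) \<ge> -1"
    unfolding lp_feasible_def by auto
  have c2: "(\<Sum>k=1..n. (kraw n k 1 - kraw n k 2) * x k) \<ge> -1"
    using cons n by (metis atLeastAtMost_iff order_refl of_nat_numeral)
  have "lp_objective n a x = (\<Sum>k=1..n. - ((kraw n k 0 + kraw n k 1 * (1 / a - 1)) * x k))"
    unfolding lp_objective_def by (simp add: sum_negf)
  also have "\<dots> \<le> (\<Sum>k=1..n. Y * ((kraw n k 2 - kraw n k 1) * x k))"
  proof (rule sum_mono)
    fix k assume k: "k \<in> {1..n}"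
    have "- (kraw n k 0 + kraw n k 1 * (1 / a - 1)) \<le> Y * (kraw n k 2 - kraw n k 1)"
      using D k by (simp add: algebra_simps)
    then have "- (kraw n k 0 + kraw n k 1 * (1 / a - 1)) * x k \<le> Y * (kraw n k 2 - kraw n k 1) * x k"
      using xpos k by (simp add: mult_right_mono)
    then show "- ((kraw n k 0 + kraw n k 1 * (1 / a - 1)) * x k) \<le> Y * ((kraw n k 2 - kraw n k 1) * x k)"
      by (simp add: algebra_simps)
  qed
  also have "\<dots> = Y * (- (\<Sum>k=1..n. (kraw n k 1 - kraw n k 2) * x k))"
    by (simp add: sum_distrib_left sum_negf[symmetric] algebra_simps)
  also have "\<dots> \<le> Y * 1"
    using c2 Y by (intro mult_left_mono) auto
  finally show "ereal (lp_objective n a x) \<le> ereal Y" by simp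
qed

lemma kraw_combination_nonneg:
  assumes n: "2 \<le> n" and k: "1 \<le> k" "k \<le> n"
    and E: "0 \<le> real n * (real n - 1) + B * (real n - 1) * (real n - 2 * real k)
              + Y * ((real n - 2 * real k)^2 - real n)"
  shows "0 \<le> kraw n k 0 + B * kraw n k 1 + Y * kraw n k 2"
proof -
  define N where "N = real n"
  define C where "C = N gchoose k"
  have "N * (N - 1) * (kraw n k 0 + B * kraw n k 1 + Y * kraw n k 2)
      = N * (N - 1) * C + B * (N - 1) * (N * kraw n k 1) + Y * (N * (N - 1) * kraw n k 2)"
    by (simp add: kraw_at_0 C_def N_def algebra_simps)
  also have "\<dots> = C * (N * (N - 1) + B * (N - 1) * (N - 2 * real k) + Y * ((N - 2 * real k)^2 - N))"
    unfolding N_def C_def kraw_at_1_closed[OF k(1)] kraw_at_2_closed[OF k(1)]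
    by (simp add: algebra_simps)
  finally have eq: "N * (N - 1) * (kraw n k 0 + B * kraw n k 1 + Y * kraw n k 2)
      = C * (N * (N - 1) + B * (N - 1) * (N - 2 * real k) + Y * ((N - 2 * real k)^2 - N))" .
  have "0 \<le> C" by (simp add: C_def N_def flip: binomial_gbinomial)
  with E have "0 \<le> N * (N - 1) * (kraw n k 0 + B * kraw n k 1 + Y * kraw n k 2)"
    unfolding eq by (simp add: N_def)
  moreover have "0 < N * (N - 1)" using n by (simp add: N_def)
  ultimately show ?thesis by (simp add: zero_le_mult_iff)
qed

lemma LambdaBar_le_quadratic_certificate:
  assumes n: "2 \<le> n" and Y: "0 \<le> Y"
    and E: "\<And>k. k \<in> {1..n} \<Longrightarrow> 0 \<le> real n * (real n - 1)
              + (1/a - 1 - Y) * (real n - 1) * (real n - 2 * real k)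
              + Y * ((real n - 2 * real k)^2 - real n)"
  shows "LambdaBar n a \<le> ereal Y"
  using n Y by (rule LambdaBar_le_dual) (use n E kraw_combination_nonneg in simp)

lemma LambdaBar_le_half_inverse:
  assumes a: "1/4 \<le> a" "a \<le> 1/2" and n: "2 \<le> n"
  shows "LambdaBar n a \<le> ereal (1/(2*a) - 1)"
proof (rule LambdaBar_le_quadratic_certificate[OF n])
  define Y where "Y = 1/(2*a) - 1"
  have Y: "0 \<le> Y" "Y \<le> 1" and B: "1/a - 1 - Y = Y + 1"
    using a by (auto simp: Y_def field_simps)
  then show "0 \<le> 1/(2*a) - 1" by (simp add: Y_def)
  fix k assume k: "k \<in> {1..n}"
  define N where "N = real n"
  define K where "K = real k"
  have KN: "1 \<le> K" "K \<le> N" using k by (auto simp: N_def K_def)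
  have "0 \<le> Y * (N - 2 * K) + N - 1 - Y" if "K \<noteq> N"
  proof -
    have "K \<le> N - 1" using k that by (auto simp: N_def K_def)
    then have "Y * (2 - N) \<le> Y * (N - 2 * K)" using Y by (intro mult_left_mono) auto
    moreover have "0 \<le> (N - 1) * (1 - Y)" using Y KN by simp
    ultimately show ?thesis by (simp add: algebra_simps)
  qed
  then have "0 \<le> 2 * (N - K) * (Y * (N - 2 * K) + N - 1 - Y)"
    using KN by (cases "K = N") auto
  also have "2 * (N - K) * (Y * (N - 2 * K) + N - 1 - Y)
      = N * (N - 1) + (Y + 1) * (N - 1) * (N - 2 * K) + Y * ((N - 2 * K)^2 - N)"
    by (simp add: algebra_simps power2_eq_square)
  finally show "0 \<le> real n * (real n - 1) + (1/a - 1 - (1/(2*a) - 1)) * (real n - 1) * (real n - 2 * real k)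
      + (1/(2*a) - 1) * ((real n - 2 * real k)^2 - real n)"
    using B by (simp add: N_def K_def Y_def)
qed

lemma eventually_LambdaBar_le:
  assumes Y: "0 < Y" and disc: "(1/a - 1 - Y)^2 < 4 * Y"
  shows "eventually (\<lambda>n. LambdaBar n a \<le> ereal Y) sequentially"
proof -
  define B where "B = 1/a - 1 - Y"
  define \<delta> where "\<delta> = 4 * Y - B^2"
  have \<delta>: "0 < \<delta>" using disc by (simp add: \<delta>_def B_def)
  obtain N0 :: nat where N0: "Y + 4 * Y^2 / \<delta> + 1 \<le> real N0"
    using real_arch_simple by blast
  have "LambdaBar n a \<le> ereal Y" if nN: "max 2 N0 \<le> n" for n
  proof (rule LambdaBar_le_quadratic_certificate)
    show "2 \<le> n" "0 \<le> Y" using nN Y by auto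
    fix k :: nat
    define N where "N = real n"
    define M where "M = N - 1"
    define v where "v = N - 2 * real k"
    have "Y + 4 * Y^2 / \<delta> \<le> M" using N0 nN by (simp add: M_def N_def)
    moreover have "0 \<le> 4 * Y^2 / \<delta>" using \<delta> by simp
    ultimately have MY: "Y \<le> M" and "4 * Y^2 / \<delta> \<le> M" using Y by linarith+
    then have "4 * Y^2 \<le> \<delta> * M" using \<delta> by (simp add: field_simps)
    then have "0 \<le> (2 * Y * v + B * M)^2 + M * (\<delta> * M - 4 * Y^2) + 4 * Y * (M - Y)"
      using MY Y by (intro add_nonneg_nonneg mult_nonneg_nonneg) auto
    also have "\<dots> = 4 * Y * (N * M + B * M * v + Y * (v^2 - N))"
      unfolding \<delta>_def M_def by (simp add: algebra_simps power2_eq_square)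
    finally have "0 \<le> N * M + B * M * v + Y * (v^2 - N)" using Y by (simp add: zero_le_mult_iff)
    then show "0 \<le> real n * (real n - 1) + (1/a - 1 - Y) * (real n - 1) * (real n - 2 * real k)
        + Y * ((real n - 2 * real k)^2 - real n)"
      by (simp add: N_def M_def v_def B_def mult_ac)
  qed
  then show ?thesis unfolding eventually_sequentially by blast
qed

lemma kraw_power_sum:
  fixes z :: real
  assumes "i \<le> n"
  shows "(\<Sum>k=1..n. kraw n k (real i) * z^k) = (1 - z)^i * (1 + z)^(n - i) - 1"
proof -
  have "kraw n 0 (real i) = 1" by (simp add: kraw_def)
  then show ?thesis
    using kraw_generating_function[OF assms, of z] by (simp add: sum.atLeast_Suc_atMost)
qed

lemma LambdaBar_ge_geometric:
  assumes n: "2 \<le> n" and a: "0 < a" and r: "-1 < r" "r < 0"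
  shows "ereal ((1 + (1/a - 1) * r) / (r - r^2)) \<le> LambdaBar n a"
proof -
  define z where "z = (1 - r) / (1 + r)"
  have z: "0 < z" and zr: "1 - z = r * (1 + z)" using r by (auto simp: z_def field_simps)
  define D where "D = 1 / (r^2 - r)"
  have "0 < r^2 - r" using r by (simp add: power2_eq_square)
  then have D: "0 < D" "D * (r^2 - r) = 1" by (auto simp: D_def)
  define c where "c = D / (1 + z)^n"
  have c: "0 < c" using D z by (simp add: c_def)
  define x where "x = (\<lambda>k. if k \<in> {1..n} then c * z^k else 0)"
  have F: "(\<Sum>k=1..n. kraw n k (real i) * x k) = D * r^i - c" if i: "i \<le> n" for i
  proof -
    have "(\<Sum>k=1..n. kraw n k (real i) * x k) = c * (\<Sum>k=1..n. kraw n k (real i) * z^k)"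
      unfolding x_def sum_distrib_left by (rule sum.cong) auto
    also have "\<dots> = c * ((1 - z)^i * (1 + z)^(n - i) - 1)" by (simp only: kraw_power_sum[OF i])
    also have "(1 - z)^i * (1 + z)^(n - i) = r^i * (1 + z)^n"
      using i by (simp add: zr power_mult_distrib mult.assoc flip: power_add)
    finally show ?thesis using z by (simp add: c_def field_simps)
  qed
  have "x \<in> lp_feasible n"
    unfolding lp_feasible_def
  proof (intro CollectI conjI ballI allI impI)
    fix k assume "k = 0 \<or> n < k" then show "x k = 0" by (auto simp: x_def)
  next
    fix k assume "k \<in> {1..n}" then show "0 \<le> x k" using c z by (simp add: x_def)
  next
    fix i assume i: "i \<in> {2..n}"
    have "r^i \<le> \<bar>r\<bar>^i" by (metis abs_ge_self power_abs)
    also have "\<dots> \<le> \<bar>r\<bar>^2" using i r by (intro power_decreasing) auto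
    finally have ri: "r^i \<le> r^2" by simp
    have "-1 = D * (r - r^2)" using D by (simp add: algebra_simps)
    also have "\<dots> \<le> D * (r - r^i)" using D ri by (intro mult_left_mono) auto
    also have "\<dots> = (\<Sum>k=1..n. (kraw n k 1 - kraw n k (real i)) * x k)"
      using F[of 1] F[of i] i n by (simp add: sum_subtractf left_diff_distrib right_diff_distrib)
    finally show "-1 \<le> (\<Sum>k=1..n. (kraw n k 1 - kraw n k (real i)) * x k)" .
  qed
  moreover have "lp_objective n a x = - D * (1 + (1/a - 1) * r) + c / a"
  proof -
    have "lp_objective n a x
        = - ((\<Sum>k=1..n. kraw n k 0 * x k) + (1/a - 1) * (\<Sum>k=1..n. kraw n k 1 * x k))"
      unfolding lp_objective_def sum_distrib_left sum.distrib[symmetric]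
      by (simp add: algebra_simps)
    also have "\<dots> = - ((D - c) + (1/a - 1) * (D * r - c))"
      using F[of 0] F[of 1] n by simp
    finally show ?thesis using a by (simp add: field_simps)
  qed
  moreover have "- D * (1 + (1/a - 1) * r) = (1 + (1/a - 1) * r) / (r - r^2)"
    by (simp add: D_def divide_minus_right[symmetric])
  ultimately have "(1 + (1/a - 1) * r) / (r - r^2) \<le> lp_objective n a x"
    using divide_pos_pos[OF c a] by linarith
  with lp_objective_le_LambdaBar[OF \<open>x \<in> lp_feasible n\<close>] show ?thesis
    by (meson ereal_less_eq(3) order_trans)
qed

lemma LambdaBar_ge_half_inverse:
  assumes n: "2 \<le> n" and a: "0 < a"
  shows "ereal (1/(2*a) - 1) \<le> LambdaBar n a"
proof -
  define x where "x = (\<lambda>k. if k = n then (1/2::real) else 0)"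
  have sum_x: "(\<Sum>k=1..n. f k * x k) = f n / 2" for f :: "nat \<Rightarrow> real"
  proof -
    have "(\<Sum>k=1..n. f k * x k) = (\<Sum>k\<in>{1..n}. if k = n then f k / 2 else 0)"
      by (rule sum.cong) (auto simp: x_def)
    then show ?thesis using n by simp
  qed
  have "x \<in> lp_feasible n"
    unfolding lp_feasible_def
  proof (intro CollectI conjI ballI allI impI)
    fix k assume "k = 0 \<or> n < k" then show "x k = 0" using n by (auto simp: x_def)
  next
    fix k show "0 \<le> x k" by (simp add: x_def)
  next
    fix i assume i: "i \<in> {2..n}"
    have "(-1::real)^i \<le> 1" by (cases "even i") auto
    then show "-1 \<le> (\<Sum>k=1..n. (kraw n k 1 - kraw n k (real i)) * x k)"
      unfolding sum_x using kraw_top_degree[of 1 n] kraw_top_degree[of i n] i n by simp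
  qed
  moreover have "lp_objective n a x = 1/(2*a) - 1"
    unfolding lp_objective_def sum_x using kraw_top_degree[of 0 n] kraw_top_degree[of 1 n] n a by (simp add: field_simps)
  ultimately show ?thesis by (metis lp_objective_le_LambdaBar)
qed

lemma sqrt_less_half: "0 < a \<Longrightarrow> a < 1/4 \<Longrightarrow> sqrt a < 1/2"
  using real_sqrt_less_iff[of a "1/4"] by (simp add: real_sqrt_divide)

lemma theta_le_LambdaBar:
  assumes n: "2 \<le> n" and a: "0 < a"
  shows "ereal (theta a) \<le> LambdaBar n a"
proof (cases "a < 1/4")
  case False
  then show ?thesis using LambdaBar_ge_half_inverse[OF n a] by (simp add: theta_def)
next
  case True
  define s where "s = sqrt a"
  have s: "0 < s" "s < 1/2" "a = s^2" using a True sqrt_less_half by (auto simp: s_def)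
  have s1: "1 - s \<noteq> 0" using s by simp
  define r where "r = - s / (1 - s)"
  have r: "-1 < r" "r < 0" using s by (auto simp: r_def field_simps)
  have e1: "1 + (1/a - 1) * r = - 1 / s"
    using s s1 unfolding r_def by (simp add: field_simps power2_eq_square)
  have e2: "r - r^2 = - s / (1 - s)^2"
    using s1 unfolding r_def by (simp add: field_simps) (simp add: eval_nat_numeral algebra_simps)
  have "theta a = (1 + (1/a - 1) * r) / (r - r^2)"
    unfolding e1 e2 using True s s1 by (simp add: theta_def s_def[symmetric] field_simps power2_eq_square)
  then show ?thesis using LambdaBar_ge_geometric[OF n a r] by simp
qed

lemma eventually_LambdaBar_less:
  assumes a: "0 < a" "a \<le> 1/2" and y: "theta a < y"
  shows "eventually (\<lambda>n. LambdaBar n a < ereal y) sequentially"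
proof (cases "a < 1/4")
  case False
  have "LambdaBar n a < ereal y" if "2 \<le> n" for n
  proof -
    have "LambdaBar n a \<le> ereal (theta a)"
      using LambdaBar_le_half_inverse[OF _ a(2) that] False by (simp add: theta_def)
    also have "\<dots> < ereal y" using y by simp
    finally show ?thesis .
  qed
  then show ?thesis unfolding eventually_sequentially by blast
next
  case True
  define t where "t = 1 / sqrt a"
  have s: "0 < sqrt a" "sqrt a < 1/2" "(sqrt a)^2 = a" using a True sqrt_less_half by auto
  have t: "2 < t" "1/a = t^2" "theta a = (t - 1)^2"
  proof -
    show "2 < t" using s by (simp add: t_def field_simps)
    show "1/a = t^2" using s by (simp add: t_def power_divide)
    have "(t - 1)^2 = ((1 - sqrt a) / sqrt a)^2" using s by (simp add: t_def field_simps)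
    then show "theta a = (t - 1)^2" using True s by (simp add: theta_def power_divide)
  qed
  define \<epsilon> where "\<epsilon> = min 1 ((y - theta a) / 2)"
  have \<epsilon>: "0 < \<epsilon>" "\<epsilon> \<le> 1" "theta a + \<epsilon> < y" using y by (auto simp: \<epsilon>_def min_def field_simps)
  define Y where "Y = theta a + \<epsilon>"
  have Y: "0 < Y" using \<epsilon> by (simp add: Y_def t add_nonneg_pos)
  have "4 * Y - (1/a - 1 - Y)^2 = \<epsilon> * (4 * t - \<epsilon>)"
    unfolding Y_def t by (simp add: algebra_simps power2_eq_square)
  also have "\<dots> > 0" using \<epsilon> t by simp
  finally have "(1/a - 1 - Y)^2 < 4 * Y" by simp
  with Y have "eventually (\<lambda>n. LambdaBar n a \<le> ereal Y) sequentially"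
    by (rule eventually_LambdaBar_le)
  then show ?thesis
    by (rule eventually_mono) (use \<epsilon> in \<open>auto simp: Y_def intro: le_less_trans\<close>)
qed

theorem theorem2:
  fixes a :: real
  assumes "0 < a" and "a \<le> 1/2"
  shows "(\<lambda>n. LambdaBar n a) \<longlonglongrightarrow> ereal (theta a)"
proof (rule order_tendstoI)
  fix y assume "y < ereal (theta a)"
  then have "y < LambdaBar n a" if "2 \<le> n" for n
    using theta_le_LambdaBar[OF that assms(1)] by (rule less_le_trans)
  then show "eventually (\<lambda>n. y < LambdaBar n a) sequentially"
    unfolding eventually_sequentially by blast
next
  fix y assume "ereal (theta a) < y"
  then obtain r where r: "theta a < r" "ereal r < y" using ereal_dense2 by force
  show "eventually (\<lambda>n. LambdaBar n a < y) sequentially"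
    using eventually_LambdaBar_less[OF assms r(1)]
    by (rule eventually_mono) (use r(2) in auto)
qed

end
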